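(* Under Hypothesis (H), define the functions $A_+:=n^2+(\mathrm{tr}S)^2-(\mathrm{tr}P)^2-(\mathrm{tr}(SP))^2+\mathrm{tr}(SPSP)-n-2n\,\mathrm{tr}(S)+2\,\mathrm{tr}(P)\mathrm{tr}(SP)$ and $A_-:=n^2+(\mathrm{tr}S)^2-(\mathrm{tr}P)^2-(\mathrm{tr}(SP))^2+\mathrm{tr}(SPSP)-n+2n\,\mathrm{tr}(S)-2\,\mathrm{tr}(P)\mathrm{tr}(SP)$ on $M$. Then: (i) $A_+\ge0$ and $A_-\ge0$ on $M$. (ii) If $\mathrm{rk}\,E_+(S)=1$ then $A_-\equiv0$. If $\mathrm{rk}\,E_+(S)\ge2$, then for every $x\in M$: $A_-(x)=0$ if and only if there exists $\varepsilon\in\{-1,1\}$ with $E_+(S)_x\subseteq E_\varepsilon(P)_x$. (iii) If $\mathrm{rk}\,E_-(S)=1$ then $A_+\equiv0$. If $\mathrm{rk}\,E_-(S)\ge2$, then for every $x\in M$: $A_+(x)=0$ if and only if there exists $\varepsilon\in\{-1,1\}$ with $E_-(S)_x\subseteq E_\varepsilon(P)_x$.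
   Context: Let $(M,g)$ be a Riemannian manifold of dimension $n$ with Levi-Civita connection $\nabla$; vectors and 1-forms are identified via $g$. For vectors $X,Y$, $X\odot Y$ is the endomorphism $Z\mapsto\langle X,Z\rangle Y+\langle Y,Z\rangle X$. Hypothesis (H): $M$ is oriented, compact, connected; $\theta$ is a 1-form on $M$, not identically zero (the Lee form of the Weyl connection $D_XY=\nabla_XY+\theta(Y)X+\theta(X)Y-\langle X,Y\rangle\theta^\sharp$); $S$ is a $g$-orthogonal involution of $\mathrm{T}M$, $S\neq\pm\mathrm{Id}$, with $DS=0$, equivalently $\nabla_XS=SX\odot\theta-S\theta\odot X$ for all $X$; $P$ is a $\nabla$-parallel $g$-orthogonal involution of $\mathrm{T}M$, $P\neq\pm\mathrm{Id}$. For an involution $F$, $E_+(F)$ and $E_-(F)$ denote its $+1$ and $-1$ eigenbundles. *)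

theory Defs
  imports "HOL-Analysis.Analysis"
begin

text \<open>Pointwise (fibrewise) model: the tangent space at each point of M is identified
with real^'n (orthonormal frame), so endomorphism fields are matrix-valued maps.\<close>

definition orth_involution :: "real^'n^'n \<Rightarrow> bool" where
  "orth_involution F \<longleftrightarrow> orthogonal_matrix F \<and> F ** F = mat 1"

definition eigsp :: "real^'n^'n \<Rightarrow> real \<Rightarrow> (real^'n) set" where
  "eigsp F e = {v. F *v v = e *\<^sub>R v}"

definition A_plus :: "real^'n^'n \<Rightarrow> real^'n^'n \<Rightarrow> real" where
  "A_plus S P = (let n = real CARD('n) in
     n^2 + (trace S)^2 - (trace P)^2 - (trace (S ** P))^2 + trace (S ** P ** S ** P)
     - n - 2 * n * trace S + 2 * trace P * trace (S ** P))"

definition A_minus :: "real^'n^'n \<Rightarrow> real^'n^'n \<Rightarrow> real" where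
  "A_minus S P = (let n = real CARD('n) in
     n^2 + (trace S)^2 - (trace P)^2 - (trace (S ** P))^2 + trace (S ** P ** S ** P)
     - n + 2 * n * trace S - 2 * trace P * trace (S ** P))"

end

theory Submission
  imports Defs
begin

text \<open>Pointwise, let \<open>B\<close> be an orthonormal basis of \<open>E\<^sub>+(S)\<close> with \<open>k\<close> elements and
  \<open>\<Pi> = \<Sum>\<^sub>b b b\<^sup>T\<close> the orthogonal projection onto it, so that \<open>S = 2\<Pi> - 1\<close>.
  Expanding the traces gives \<open>A\<^sub>- = 4 D\<close> with the defect
  \<open>D = k\<^sup>2 - k + \<Sum>\<^sub>b\<^sub>,\<^sub>c \<langle>Pb,c\<rangle>\<^sup>2 - (\<Sum>\<^sub>b \<langle>b,Pb\<rangle>)\<^sup>2\<close>.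
  Writing \<open>x\<^sub>b = \<langle>b,Pb\<rangle> \<in> [-1,1]\<close>, Lagrange's identity turns \<open>D\<close> into a sum of three
  nonnegative terms: \<open>(k-1)(k - \<Sum>\<^sub>b x\<^sub>b\<^sup>2)\<close>, the off-diagonal squares \<open>\<langle>Pb,c\<rangle>\<^sup>2\<close>, and
  \<open>\<frac>1 2 \<Sum>\<^sub>b\<^sub>,\<^sub>c (x\<^sub>b - x\<^sub>c)\<^sup>2\<close>. For \<open>k = 1\<close> the defect vanishes identically; for \<open>k \<ge> 2\<close> it
  vanishes iff all \<open>x\<^sub>b\<close> are equal to a common \<open>\<epsilon> = \<plusminus>1\<close>, i.e. iff \<open>P\<close> acts as \<open>\<epsilon>\<close> on \<open>E\<^sub>+(S)\<close>.
  Replacing \<open>S\<close> by \<open>-S\<close> exchanges \<open>A\<^sub>+\<close> with \<open>A\<^sub>-\<close> and \<open>E\<^sub>-(S)\<close> with \<open>E\<^sub>+(S)\<close>.\<close>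

lemma matrix_add_rdistrib: "((A::'a::semiring_1^'n^'m) + B) ** C = A ** C + B ** C"
  by (simp add: matrix_matrix_mult_def vec_eq_iff sum.distrib distrib_right)

lemma matrix_diff_rdistrib: "((A::'a::ring_1^'n^'m) - B) ** C = A ** C - B ** C"
  by (simp add: matrix_matrix_mult_def vec_eq_iff sum_subtractf left_diff_distrib)

lemma matrix_diff_ldistrib: "(C::'a::ring_1^'n^'m) ** (A - B) = C ** A - C ** B"
  by (simp add: matrix_matrix_mult_def vec_eq_iff sum_subtractf right_diff_distrib)

lemma matrix_sum_rdistrib:
  "finite I \<Longrightarrow> (\<Sum>i\<in>I. f i) ** (C::'a::semiring_1^'k^'n) = (\<Sum>i\<in>I. (f i :: 'a^'n^'m) ** C)"
  by (induction I rule: finite_induct) (auto simp: matrix_add_rdistrib)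

lemma matrix_vector_mult_sum:
  "finite I \<Longrightarrow> (\<Sum>i\<in>I. f i) *v (x::'a::semiring_1^'n) = (\<Sum>i\<in>I. (f i :: 'a^'n^'m) *v x)"
  by (induction I rule: finite_induct) (auto simp: matrix_vector_mult_add_rdistrib)

lemma trace_sum: "finite I \<Longrightarrow> trace (\<Sum>i\<in>I. f i) = (\<Sum>i\<in>I. trace (f i :: 'a::comm_semiring_1^'n^'n))"
  by (induction I rule: finite_induct) (auto simp: trace_add trace_0[simplified])

lemma matrix_neg_mult: "(- A) ** B = - ((A::'a::ring_1^'n^'m) ** (B::'a^'k^'n))"
  by (simp add: matrix_matrix_mult_def vec_eq_iff sum_negf)

lemma matrix_mult_neg: "A ** (- B) = - ((A::'a::ring_1^'n^'m) ** (B::'a^'k^'n))"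
  by (simp add: matrix_matrix_mult_def vec_eq_iff sum_negf)

lemma matrix_neg_vector_mult: "(- A) *v x = - ((A::'a::ring_1^'n^'m) *v x)"
  by (simp add: matrix_vector_mult_def vec_eq_iff sum_negf)

lemma transpose_neg: "transpose (- A) = - transpose (A::'a::ring_1^'n^'m)"
  by (simp add: transpose_def vec_eq_iff)

lemma trace_neg: "trace (- A) = - trace (A::'a::comm_ring_1^'n^'n)"
  by (simp add: trace_def sum_negf)

lemma symmetric_matrix_inner: "transpose A = A \<Longrightarrow> (A *v x) \<bullet> y = x \<bullet> (A *v (y::real^'n))"
  by (metis dot_lmul_matrix vector_transpose_matrix)

lemma orthogonal_matrix_inner:
  fixes Q :: "real^'n^'n"
  assumes "orthogonal_matrix Q"
  shows "(Q *v v) \<bullet> (Q *v w) = v \<bullet> w"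
  using assms orthogonal_transformation_matrix[of "(*v) Q"]
  by (simp add: orthogonal_transformation_def)

definition outer :: "real^'n \<Rightarrow> real^'m \<Rightarrow> real^'m^'n" where
  "outer u v = (\<chi> i j. u$i * v$j)"

lemma outer_mult_vector: "outer u v *v x = (v \<bullet> x) *\<^sub>R u"
  by (simp add: outer_def vec_eq_iff matrix_vector_mult_def inner_vec_def sum_distrib_left mult_ac)

lemma trace_outer_mult: "trace (outer u v ** X) = v \<bullet> (X *v u)"
proof -
  have "trace (outer u v ** X) = (\<Sum>i\<in>UNIV. \<Sum>j\<in>UNIV. v$j * (X$j$i * u$i))"
    by (simp add: trace_def outer_def matrix_matrix_mult_def sum_distrib_left mult_ac)
  also have "\<dots> = v \<bullet> (X *v u)"
    by (subst sum.swap) (simp add: inner_vec_def matrix_vector_mult_def sum_distrib_left)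
  finally show ?thesis .
qed

definition orthonormal :: "'a::real_inner set \<Rightarrow> bool" where
  "orthonormal B \<longleftrightarrow> pairwise orthogonal B \<and> (\<forall>b\<in>B. b \<bullet> b = 1)"

lemma orthonormal_expansion:
  fixes B :: "'a::euclidean_space set"
  assumes fin: "finite B" and on: "orthonormal B" and y: "y \<in> span B"
  shows "y = (\<Sum>b\<in>B. (b \<bullet> y) *\<^sub>R b)"
proof -
  define z where "z = y - (\<Sum>b\<in>B. (b \<bullet> y) *\<^sub>R b)"
  have "c \<bullet> z = 0" if c: "c \<in> B" for c
  proof -
    have "(\<Sum>b\<in>B-{c}. (b \<bullet> y) * (c \<bullet> b)) = 0"
      using on c by (intro sum.neutral) (auto simp: orthonormal_def pairwise_def orthogonal_def)
    moreover have "c \<bullet> (\<Sum>b\<in>B. (b \<bullet> y) *\<^sub>R b)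
        = (c \<bullet> y) * (c \<bullet> c) + (\<Sum>b\<in>B-{c}. (b \<bullet> y) * (c \<bullet> b))"
      using fin c unfolding inner_sum_right by (simp add: sum.remove)
    ultimately show ?thesis using on c by (simp add: z_def inner_diff_right orthonormal_def)
  qed
  moreover have "z \<in> span B" unfolding z_def
    by (rule span_diff[OF y], intro span_sum span_scale span_base)
  ultimately have "orthogonal z z"
    using orthogonal_to_span by (metis inner_commute orthogonal_def)
  thus ?thesis by (simp add: z_def orthogonal_self)
qed

definition orthoproj :: "(real^'n) set \<Rightarrow> real^'n^'n" where
  "orthoproj B = (\<Sum>b\<in>B. outer b b)"

lemma orthoproj_mult_vector: "finite B \<Longrightarrow> orthoproj B *v x = (\<Sum>b\<in>B. (b \<bullet> x) *\<^sub>R b)"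
  by (simp add: orthoproj_def matrix_vector_mult_sum outer_mult_vector)

lemma trace_orthoproj_mult: "finite B \<Longrightarrow> trace (orthoproj B ** X) = (\<Sum>b\<in>B. b \<bullet> (X *v b))"
  by (simp add: orthoproj_def matrix_sum_rdistrib trace_sum trace_outer_mult)

lemma trace_orthoproj: "finite B \<Longrightarrow> orthonormal B \<Longrightarrow> trace (orthoproj B) = real (card B)"
  using trace_orthoproj_mult[of B "mat 1"] by (simp add: orthonormal_def)

lemma orth_involution_symmetric: "orth_involution F \<Longrightarrow> transpose F = F"
  unfolding orth_involution_def orthogonal_matrix_def
  by (metis matrix_mul_assoc matrix_mul_lid matrix_mul_rid)

lemma orth_involution_twice: "orth_involution F \<Longrightarrow> F *v (F *v x) = x"
  unfolding orth_involution_def by (simp add: matrix_vector_mul_assoc)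

lemma orth_involution_neg: "orth_involution F \<Longrightarrow> orth_involution (- F)"
  by (simp add: orth_involution_def orthogonal_matrix_def transpose_neg matrix_neg_mult matrix_mult_neg)

lemma subspace_eigsp: "subspace (eigsp F e)"
  unfolding subspace_def eigsp_def
  by (simp add: matrix_vector_right_distrib matrix_vector_mult_scaleR scaleR_add_right)

lemma eigsp_neg: "eigsp (- F) e = eigsp F (- e)"
proof -
  have "(- F) *v v = e *\<^sub>R v \<longleftrightarrow> F *v v = (- e) *\<^sub>R v" for v
    using minus_equation_iff[of "F *v v" "e *\<^sub>R v"] by (auto simp: matrix_neg_vector_mult)
  thus ?thesis by (simp add: eigsp_def)
qed

lemma orth_involution_eq_reflection:
  fixes S :: "real^'n^'n"
  assumes S: "orth_involution S" and fin: "finite B" and on: "orthonormal B"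
    and span: "span B = eigsp S 1"
  shows "S = orthoproj B + orthoproj B - mat 1"
proof -
  have Sx: "S *v x = orthoproj B *v x + orthoproj B *v x - x" for x
  proof -
    \<comment> \<open>\<open>y\<close> is the component of \<open>x\<close> in \<open>E\<^sub>+(S)\<close>\<close>
    define y where "y = (1/2) *\<^sub>R (x + S *v x)"
    have "S *v y = y"
      using orth_involution_twice[OF S, of x] by (simp add: y_def algebra_simps)
    hence "y \<in> span B" by (simp add: span eigsp_def)
    moreover have "b \<bullet> y = b \<bullet> x" if "b \<in> B" for b
    proof -
      have "S *v b = b" using span span_base[OF that] by (auto simp: eigsp_def)
      moreover have "b \<bullet> (S *v x) = (S *v b) \<bullet> x"
        using symmetric_matrix_inner[OF orth_involution_symmetric[OF S]] by simp
      ultimately show ?thesis by (simp add: y_def inner_add_right)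
    qed
    ultimately have "y = orthoproj B *v x"
      using orthonormal_expansion[OF fin on] unfolding orthoproj_mult_vector[OF fin]
      by (metis (no_types, lifting) sum.cong)
    moreover have "S *v x = 2 *\<^sub>R y - x" by (simp add: y_def)
    ultimately show ?thesis by (simp add: scaleR_2)
  qed
  show ?thesis
    by (subst matrix_eq) (simp only: Sx matrix_vector_mult_add_rdistrib
        matrix_vector_mult_diff_rdistrib matrix_vector_mul_lid, simp)
qed

definition defect :: "real^'n^'n \<Rightarrow> (real^'n) set \<Rightarrow> real" where
  "defect P B = (real (card B))\<^sup>2 - real (card B) + (\<Sum>b\<in>B. \<Sum>c\<in>B. ((P *v b) \<bullet> c)\<^sup>2)
     - (\<Sum>b\<in>B. b \<bullet> (P *v b))\<^sup>2"

lemma A_minus_eq_defect: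
  fixes S P :: "real^'n^'n"
  assumes S: "orth_involution S" and P: "orth_involution P"
    and fin: "finite B" and on: "orthonormal B" and span: "span B = eigsp S 1"
  shows "A_minus S P = 4 * defect P B"
proof -
  let ?k = "real (card B)" and ?\<Pi> = "orthoproj B"
  define Q where "Q = P ** ?\<Pi> ** P"
  have S_eq: "S = ?\<Pi> + ?\<Pi> - mat 1" by (rule orth_involution_eq_reflection[OF S fin on span])
  have PP: "P ** P = mat 1" using P by (simp add: orth_involution_def)
  have PSP: "P ** S ** P = Q + Q - mat 1"
    by (simp only: S_eq Q_def matrix_add_rdistrib matrix_diff_rdistrib matrix_add_ldistrib
        matrix_diff_ldistrib PP matrix_mul_rid matrix_mul_assoc)
  have tr\<Pi>: "trace ?\<Pi> = ?k" by (rule trace_orthoproj[OF fin on])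
  have trQ: "trace Q = ?k"
    by (metis Q_def PP matrix_mul_assoc matrix_mul_rid tr\<Pi> trace_mul_sym)
  have tr\<Pi>Q: "trace (?\<Pi> ** Q) = (\<Sum>b\<in>B. \<Sum>c\<in>B. ((P *v b) \<bullet> c)\<^sup>2)"
  proof -
    have "b \<bullet> (Q *v b) = (P *v b) \<bullet> (?\<Pi> *v (P *v b))" for b
      using symmetric_matrix_inner[OF orth_involution_symmetric[OF P], of b]
      by (simp add: Q_def matrix_vector_mul_assoc[symmetric])
    thus ?thesis
      by (simp add: trace_orthoproj_mult[OF fin] orthoproj_mult_vector[OF fin]
          inner_sum_right inner_commute power2_eq_square)
  qed
  have trS: "trace S = 2 * ?k - real CARD('n)"
    by (simp only: S_eq trace_add trace_sub trace_I tr\<Pi>)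
  have trSP: "trace (S ** P) = 2 * (\<Sum>b\<in>B. b \<bullet> (P *v b)) - trace P"
    by (simp only: S_eq matrix_add_rdistrib matrix_diff_rdistrib trace_add trace_sub matrix_mul_lid)
      (simp add: trace_orthoproj_mult[OF fin])
  have "S ** P ** S ** P = S ** (P ** S ** P)" by (simp add: matrix_mul_assoc)
  also have "\<dots> = (?\<Pi> + ?\<Pi> - mat 1) ** (Q + Q - mat 1)" by (simp only: PSP flip: S_eq)
  finally have trSPSP: "trace (S ** P ** S ** P)
      = 4 * (\<Sum>b\<in>B. \<Sum>c\<in>B. ((P *v b) \<bullet> c)\<^sup>2) - 4 * ?k + real CARD('n)"
    by (simp only: matrix_add_rdistrib matrix_diff_rdistrib matrix_add_ldistrib matrix_diff_ldistrib
        trace_add trace_sub trace_I tr\<Pi>Q trQ tr\<Pi> matrix_mul_lid matrix_mul_rid)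
  show ?thesis
    unfolding A_minus_def defect_def Let_def trS trSP trSPSP
    by (simp add: algebra_simps power2_eq_square)
qed

lemma lagrange_identity:
  fixes x :: "'a \<Rightarrow> real"
  assumes "finite B"
  shows "(\<Sum>b\<in>B. \<Sum>c\<in>B. (x b - x c)\<^sup>2)
    = 2 * (real (card B) * (\<Sum>b\<in>B. (x b)\<^sup>2) - (\<Sum>b\<in>B. x b)\<^sup>2)"
proof -
  have "(\<Sum>b\<in>B. \<Sum>c\<in>B. (x b - x c)\<^sup>2) = (\<Sum>b\<in>B. \<Sum>c\<in>B. (x b)\<^sup>2 + (x c)\<^sup>2 - 2 * (x b * x c))"
    by (simp add: power2_diff mult.assoc)
  also have "\<dots> = real (card B) * (\<Sum>b\<in>B. (x b)\<^sup>2) + real (card B) * (\<Sum>c\<in>B. (x c)\<^sup>2)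
      - 2 * ((\<Sum>b\<in>B. x b) * (\<Sum>c\<in>B. x c))"
    by (simp only: sum.distrib sum_subtractf sum_constant sum_distrib_left[symmetric]
        sum_distrib_right[symmetric]; simp)
  finally show ?thesis by (simp add: power2_eq_square algebra_simps)
qed

lemma defect_decomposition:
  fixes P :: "real^'n^'n"
  assumes fin: "finite B"
  defines "x \<equiv> \<lambda>b. b \<bullet> (P *v b)"
  shows "defect P B = (real (card B) - 1) * (real (card B) - (\<Sum>b\<in>B. (x b)\<^sup>2))
    + (\<Sum>b\<in>B. \<Sum>c\<in>B-{b}. ((P *v b) \<bullet> c)\<^sup>2) + (\<Sum>b\<in>B. \<Sum>c\<in>B. (x b - x c)\<^sup>2) / 2"
proof -
  have "(\<Sum>c\<in>B. ((P *v b) \<bullet> c)\<^sup>2) = (x b)\<^sup>2 + (\<Sum>c\<in>B-{b}. ((P *v b) \<bullet> c)\<^sup>2)" if "b \<in> B" for b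
    using fin that by (simp add: sum.remove inner_commute x_def)
  hence split: "(\<Sum>b\<in>B. \<Sum>c\<in>B. ((P *v b) \<bullet> c)\<^sup>2)
      = (\<Sum>b\<in>B. (x b)\<^sup>2) + (\<Sum>b\<in>B. \<Sum>c\<in>B-{b}. ((P *v b) \<bullet> c)\<^sup>2)"
    by (simp add: sum.distrib)
  have lagrange: "(\<Sum>b\<in>B. \<Sum>c\<in>B. (x b - x c)\<^sup>2) / 2
      = real (card B) * (\<Sum>b\<in>B. (x b)\<^sup>2) - (\<Sum>b\<in>B. x b)\<^sup>2"
    by (simp add: lagrange_identity[OF fin])
  have diagonal: "b \<bullet> (P *v b) = x b" for b by (simp add: x_def)
  show ?thesis
    unfolding defect_def diagonal split lagrange by (simp add: algebra_simps power2_eq_square)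
qed

lemma orth_involution_diagonal_le_1:
  assumes "orth_involution P" and "b \<bullet> b = 1"
  shows "(b \<bullet> (P *v b))\<^sup>2 \<le> 1"
proof -
  have "norm (P *v b) = norm b"
    using assms orthogonal_matrix_inner[of P b b] by (simp add: orth_involution_def norm_eq_sqrt_inner)
  hence "\<bar>b \<bullet> (P *v b)\<bar> \<le> 1"
    using Cauchy_Schwarz_ineq2[of b "P *v b"] assms(2) by (simp add: norm_eq_sqrt_inner)
  thus ?thesis by (simp add: abs_square_le_1)
qed

lemma orth_involution_diagonal_eq_1:
  assumes "orth_involution P" and "b \<bullet> b = 1" and "(b \<bullet> (P *v b))\<^sup>2 = 1"
  shows "P *v b = (b \<bullet> (P *v b)) *\<^sub>R b"
proof -
  have "(P *v b) \<bullet> (P *v b) = 1"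
    using assms orthogonal_matrix_inner[of P b b] by (simp add: orth_involution_def)
  hence "(P *v b - (b \<bullet> (P *v b)) *\<^sub>R b) \<bullet> (P *v b - (b \<bullet> (P *v b)) *\<^sub>R b) = 0"
    using assms by (simp add: inner_diff_left inner_diff_right inner_commute power2_eq_square)
  thus ?thesis by simp
qed

lemma sum_diagonal_le_card:
  assumes "orth_involution P" and "orthonormal B"
  shows "(\<Sum>b\<in>B. (b \<bullet> (P *v b))\<^sup>2) \<le> real (card B)"
proof -
  have "(\<Sum>b\<in>B. (b \<bullet> (P *v b))\<^sup>2) \<le> (\<Sum>b\<in>B. 1)"
    using assms by (intro sum_mono) (simp add: orthonormal_def orth_involution_diagonal_le_1)
  thus ?thesis by simp
qed

lemma defect_nonneg:
  assumes P: "orth_involution P" and fin: "finite B" and on: "orthonormal B"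
  shows "defect P B \<ge> 0"
proof (cases "B = {}")
  case True
  thus ?thesis by (simp add: defect_def)
next
  case False
  hence "real (card B) \<ge> 1" using fin by (simp add: Suc_le_eq card_gt_0_iff)
  hence "(real (card B) - 1) * (real (card B) - (\<Sum>b\<in>B. (b \<bullet> (P *v b))\<^sup>2)) \<ge> 0"
    using sum_diagonal_le_card[OF P on] by simp
  moreover have "(\<Sum>b\<in>B. \<Sum>c\<in>B-{b}. ((P *v b) \<bullet> c)\<^sup>2) \<ge> 0"
    and "(\<Sum>b\<in>B. \<Sum>c\<in>B. (b \<bullet> (P *v b) - c \<bullet> (P *v c))\<^sup>2) \<ge> 0"
    by (intro sum_nonneg; simp)+
  ultimately show ?thesis by (simp add: defect_decomposition[OF fin])
qed

lemma defect_singleton: "defect P {b} = 0"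
  by (simp add: defect_def inner_commute)

lemma defect_eq_0_iff:
  assumes P: "orth_involution P" and fin: "finite B" and on: "orthonormal B" and two: "card B \<ge> 2"
  shows "defect P B = 0 \<longleftrightarrow> (\<exists>e\<in>{-1, 1::real}. \<forall>b\<in>B. P *v b = e *\<^sub>R b)"
proof
  define x where "x b = b \<bullet> (P *v b)" for b
  let ?k = "real (card B)"
  assume "defect P B = 0"
  hence "(?k - 1) * (?k - (\<Sum>b\<in>B. (x b)\<^sup>2)) + (\<Sum>b\<in>B. \<Sum>c\<in>B-{b}. ((P *v b) \<bullet> c)\<^sup>2)
      + (\<Sum>b\<in>B. \<Sum>c\<in>B. (x b - x c)\<^sup>2) / 2 = 0"
    using defect_decomposition[OF fin, of P] by (simp add: x_def)
  moreover have "(\<Sum>b\<in>B. (x b)\<^sup>2) \<le> ?k" using sum_diagonal_le_card[OF P on] by (simp add: x_def)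
  hence "(?k - 1) * (?k - (\<Sum>b\<in>B. (x b)\<^sup>2)) \<ge> 0" using two by simp
  moreover have "(\<Sum>b\<in>B. \<Sum>c\<in>B-{b}. ((P *v b) \<bullet> c)\<^sup>2) \<ge> 0" and "(\<Sum>b\<in>B. \<Sum>c\<in>B. (x b - x c)\<^sup>2) \<ge> 0"
    by (intro sum_nonneg; simp)+
  ultimately have "(?k - 1) * (?k - (\<Sum>b\<in>B. (x b)\<^sup>2)) = 0"
    and lag: "(\<Sum>b\<in>B. \<Sum>c\<in>B. (x b - x c)\<^sup>2) = 0"
    by linarith+
  hence "(\<Sum>b\<in>B. 1 - (x b)\<^sup>2) = 0" using two by (simp add: sum_subtractf)
  moreover have "1 - (x b)\<^sup>2 \<ge> 0" if "b \<in> B" for b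
    using orth_involution_diagonal_le_1[OF P] on that by (simp add: orthonormal_def x_def)
  ultimately have x1: "(x b)\<^sup>2 = 1" if "b \<in> B" for b
    using sum_nonneg_eq_0_iff[OF fin, of "\<lambda>b. 1 - (x b)\<^sup>2"] that by auto
  have row: "(\<Sum>c\<in>B. (x b - x c)\<^sup>2) = 0" if "b \<in> B" for b
    using lag sum_nonneg_eq_0_iff[OF fin, of "\<lambda>b. \<Sum>c\<in>B. (x b - x c)\<^sup>2"] that
    by (simp add: sum_nonneg)
  have const: "x b = x c" if "b \<in> B" "c \<in> B" for b c
  proof -
    have "(x b - x c)\<^sup>2 = 0"
      using sum_nonneg_eq_0_iff[OF fin, of "\<lambda>c. (x b - x c)\<^sup>2"] row[OF that(1)] that(2) by auto
    thus ?thesis by simp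
  qed
  obtain b0 where b0: "b0 \<in> B" using two by fastforce
  have "P *v b = x b0 *\<^sub>R b" if "b \<in> B" for b
    using orth_involution_diagonal_eq_1[OF P] on x1 const[OF b0 that] that
    by (simp add: orthonormal_def x_def)
  moreover have "x b0 \<in> {-1, 1}" using x1[OF b0] by (auto simp: power2_eq_1_iff)
  ultimately show "\<exists>e\<in>{-1, 1::real}. \<forall>b\<in>B. P *v b = e *\<^sub>R b" by blast
next
  assume "\<exists>e\<in>{-1, 1::real}. \<forall>b\<in>B. P *v b = e *\<^sub>R b"
  then obtain e where "e \<in> {-1, 1}" and Pb: "\<And>b. b \<in> B \<Longrightarrow> P *v b = e *\<^sub>R b" by blast
  hence e: "e\<^sup>2 = 1" by auto
  have "(\<Sum>c\<in>B. ((P *v b) \<bullet> c)\<^sup>2) = 1" if "b \<in> B" for b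
  proof -
    have "(\<Sum>c\<in>B-{b}. ((P *v b) \<bullet> c)\<^sup>2) = 0"
      using on that Pb by (intro sum.neutral) (auto simp: orthonormal_def pairwise_def orthogonal_def)
    thus ?thesis using that fin on Pb e by (simp add: sum.remove orthonormal_def power_mult_distrib)
  qed
  moreover have "(\<Sum>b\<in>B. b \<bullet> (P *v b)) = real (card B) * e"
    using Pb on by (simp add: orthonormal_def)
  ultimately show "defect P B = 0"
    using e by (simp add: defect_def power_mult_distrib)
qed

lemma obtain_orthonormal_eigenbasis:
  fixes S :: "real^'n^'n"
  obtains B where "finite B" "orthonormal B" "B \<subseteq> eigsp S 1" "span B = eigsp S 1"
    "card B = dim (eigsp S 1)"
proof -
  obtain B where "B \<subseteq> eigsp S 1" "pairwise orthogonal B" "\<And>x. x \<in> B \<Longrightarrow> norm x = 1"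
    "independent B" "card B = dim (eigsp S 1)" "span B = eigsp S 1"
    using orthonormal_basis_subspace[OF subspace_eigsp] by metis
  moreover from \<open>independent B\<close> have "finite B" by (rule independent_imp_finite)
  ultimately show ?thesis
    using that[of B] by (simp add: orthonormal_def norm_eq_1)
qed

lemma eigsp_subset_iff_basis:
  assumes "B \<subseteq> eigsp S 1" and "span B = eigsp S 1"
  shows "eigsp S 1 \<subseteq> eigsp P e \<longleftrightarrow> (\<forall>b\<in>B. P *v b = e *\<^sub>R b)"
  using assms span_minimal[OF _ subspace_eigsp, of B P e] by (auto simp: eigsp_def)

lemma A_minus_pointwise:
  fixes S P :: "real^'n^'n"
  assumes S: "orth_involution S" and P: "orth_involution P"
  shows "A_minus S P \<ge> 0"
    and "dim (eigsp S 1) = 1 \<Longrightarrow> A_minus S P = 0"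
    and "dim (eigsp S 1) \<ge> 2 \<Longrightarrow>
           A_minus S P = 0 \<longleftrightarrow> (\<exists>e\<in>{-1, 1::real}. eigsp S 1 \<subseteq> eigsp P e)"
proof -
  obtain B where fin: "finite B" and on: "orthonormal B" and sub: "B \<subseteq> eigsp S 1"
    and span: "span B = eigsp S 1" and card: "card B = dim (eigsp S 1)"
    by (rule obtain_orthonormal_eigenbasis)
  note A = A_minus_eq_defect[OF S P fin on span]
  show "A_minus S P \<ge> 0" using A defect_nonneg[OF P fin on] by simp
  show "A_minus S P = 0" if "dim (eigsp S 1) = 1"
    using A card that by (auto simp: card_1_singleton_iff defect_singleton)
  show "A_minus S P = 0 \<longleftrightarrow> (\<exists>e\<in>{-1, 1::real}. eigsp S 1 \<subseteq> eigsp P e)"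
    if "dim (eigsp S 1) \<ge> 2"
    using A defect_eq_0_iff[OF P fin on] card that eigsp_subset_iff_basis[OF sub span] by simp
qed

lemma A_plus_eq_A_minus_neg: "A_plus S P = A_minus (- S) P"
  by (simp add: A_plus_def A_minus_def Let_def trace_neg matrix_neg_mult matrix_mult_neg)

lemma A_plus_pointwise:
  fixes S P :: "real^'n^'n"
  assumes S: "orth_involution S" and P: "orth_involution P"
  shows "A_plus S P \<ge> 0"
    and "dim (eigsp S (-1)) = 1 \<Longrightarrow> A_plus S P = 0"
    and "dim (eigsp S (-1)) \<ge> 2 \<Longrightarrow>
           A_plus S P = 0 \<longleftrightarrow> (\<exists>e\<in>{-1, 1::real}. eigsp S (-1) \<subseteq> eigsp P e)"
  using A_minus_pointwise[OF orth_involution_neg[OF S] P]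
  by (simp_all add: A_plus_eq_A_minus_neg eigsp_neg)

theorem theorem5p4:
  fixes M :: "'m set" and S P :: "'m \<Rightarrow> real^'n^'n"
  assumes S_inv: "\<forall>x\<in>M. orth_involution (S x)"
      and S_nontriv: "\<forall>x\<in>M. S x \<noteq> mat 1 \<and> S x \<noteq> - mat 1"
      and P_inv: "\<forall>x\<in>M. orth_involution (P x)"
      and P_nontriv: "\<forall>x\<in>M. P x \<noteq> mat 1 \<and> P x \<noteq> - mat 1"
  shows "(\<forall>x\<in>M. A_plus (S x) (P x) \<ge> 0 \<and> A_minus (S x) (P x) \<ge> 0)
    \<and> ((\<forall>x\<in>M. dim (eigsp (S x) 1) = 1) \<longrightarrow> (\<forall>x\<in>M. A_minus (S x) (P x) = 0))
    \<and> ((\<forall>x\<in>M. dim (eigsp (S x) 1) \<ge> 2) \<longrightarrow> (\<forall>x\<in>M. A_minus (S x) (P x) = 0 \<longleftrightarrow>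
          (\<exists>e\<in>{-1, 1::real}. eigsp (S x) 1 \<subseteq> eigsp (P x) e)))
    \<and> ((\<forall>x\<in>M. dim (eigsp (S x) (-1)) = 1) \<longrightarrow> (\<forall>x\<in>M. A_plus (S x) (P x) = 0))
    \<and> ((\<forall>x\<in>M. dim (eigsp (S x) (-1)) \<ge> 2) \<longrightarrow> (\<forall>x\<in>M. A_plus (S x) (P x) = 0 \<longleftrightarrow>
          (\<exists>e\<in>{-1, 1::real}. eigsp (S x) (-1) \<subseteq> eigsp (P x) e)))"
proof -
  have S: "orth_involution (S x)" and P: "orth_involution (P x)" if "x \<in> M" for x
    using that S_inv P_inv by auto
  show ?thesis
    by (intro conjI ballI impI)
      (simp_all add: A_minus_pointwise[OF S P] A_plus_pointwise[OF S P])
qed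

end
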